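(* Let $R$ be a commutative ring with identity and $S$ a multiplicative subset of $R$. Let $M$ and $N$ be $R$-modules and suppose $f:M\rightarrow N$ is a $u$-$S$-isomorphism. Then there exist a $u$-$S$-isomorphism $g:N\rightarrow M$ and an element $t\in S$ such that $f\circ g=t\,\mathrm{Id}_N$ and $g\circ f=t\,\mathrm{Id}_M$.
   Context: A multiplicative subset $S$ of $R$ satisfies $1\in S$ and $s_1s_2\in S$ for $s_1,s_2\in S$. An $R$-module $T$ is $u$-$S$-torsion (with respect to $s$) if there is $s\in S$ with $sT=0$. A sequence $A\xrightarrow{f}B\xrightarrow{g}C$ is $u$-$S$-exact at $B$ (with respect to $s\in S$) if $s\,\mathrm{Ker}(g)\subseteq \mathrm{Im}(f)$ and $s\,\mathrm{Im}(f)\subseteq\mathrm{Ker}(g)$. An $R$-homomorphism $f:M\to N$ is a $u$-$S$-isomorphism if $0\to M\xrightarrow{f}N\to 0$ is $u$-$S$-exact, i.e. there is $s\in S$ with $s\,\mathrm{Ker}(f)=0$ and $sN\subseteq \mathrm{Im}(f)$. *)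

theory Defs
  imports Complex_Main
begin

text \<open>Rings are types of class comm_ring_1; modules are abelian groups 'b with a
scalar multiplication scale, satisfying the module axioms (locale module from Main).\<close>

definition multiplicative_subset :: "'a::comm_ring_1 set \<Rightarrow> bool" where
  "multiplicative_subset S \<longleftrightarrow> 1 \<in> S \<and> (\<forall>s1\<in>S. \<forall>s2\<in>S. s1 * s2 \<in> S)"

definition u_S_isomorphism ::
  "'a::comm_ring_1 set \<Rightarrow> ('a \<Rightarrow> 'b::ab_group_add \<Rightarrow> 'b) \<Rightarrow> ('a \<Rightarrow> 'c::ab_group_add \<Rightarrow> 'c)
     \<Rightarrow> ('b \<Rightarrow> 'c) \<Rightarrow> bool" where
  "u_S_isomorphism S scaleM scaleN f \<longleftrightarrow>
     module_hom scaleM scaleN f \<and>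
     (\<exists>s\<in>S. (\<forall>x. f x = 0 \<longrightarrow> scaleM s x = 0) \<and> (\<forall>y. scaleN s y \<in> range f))"

end

theory Submission
  imports Defs
begin

text \<open>If \<open>s\<close> kills \<open>Ker f\<close> and \<open>s N \<subseteq> Im f\<close>, send \<open>y\<close> to \<open>s x\<close> for any \<open>x\<close> with
  \<open>f x = s y\<close>. Two choices of \<open>x\<close> differ by an element of \<open>Ker f\<close>, so multiplying by \<open>s\<close>
  makes the map well defined and \<open>R\<close>-linear, and both composites are multiplication
  by \<open>s\<^sup>2\<close>.\<close>

locale u_iso_wrt = module_hom +
  fixes s :: 'a
  assumes scale_kills_kernel: "f x = 0 \<Longrightarrow> s *a x = 0"
    and scale_in_range: "s *b y \<in> range f"
begin

definition preimage_of_scaled :: "'c \<Rightarrow> 'b" where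
  "preimage_of_scaled y = (SOME x. f x = s *b y)"

definition scaled_inverse :: "'c \<Rightarrow> 'b" where
  "scaled_inverse y = s *a preimage_of_scaled y"

lemma f_preimage_of_scaled: "f (preimage_of_scaled y) = s *b y"
  unfolding preimage_of_scaled_def
  using scale_in_range[of y] by (metis (mono_tags) rangeE someI)

lemma scale_eq_if_image_eq:
  assumes "f x = f x'"
  shows "s *a x = s *a x'"
proof -
  have "f (x - x') = 0"
    using assms by (simp add: diff)
  then have "s *a (x - x') = 0"
    by (rule scale_kills_kernel)
  then show ?thesis
    by (simp add: m1.scale_right_diff_distrib)
qed

lemma scaled_inverse_eqI:
  assumes "f x = s *b y"
  shows "scaled_inverse y = s *a x"
  unfolding scaled_inverse_def
  using assms f_preimage_of_scaled by (metis scale_eq_if_image_eq)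

lemma f_scaled_inverse: "f (scaled_inverse y) = (s * s) *b y"
  by (simp add: scaled_inverse_def scale f_preimage_of_scaled)

lemma scaled_inverse_f: "scaled_inverse (f x) = (s * s) *a x"
  using scaled_inverse_eqI[of "s *a x" "f x"] by (simp add: scale)

lemma module_hom_scaled_inverse: "module_hom s2 s1 scaled_inverse"
proof unfold_locales
  fix y1 y2
  have "f (preimage_of_scaled y1 + preimage_of_scaled y2) = s *b (y1 + y2)"
    by (simp add: add f_preimage_of_scaled m2.scale_right_distrib)
  then have "scaled_inverse (y1 + y2) = s *a (preimage_of_scaled y1 + preimage_of_scaled y2)"
    by (rule scaled_inverse_eqI)
  then show "scaled_inverse (y1 + y2) = scaled_inverse y1 + scaled_inverse y2"
    by (simp add: scaled_inverse_def m1.scale_right_distrib)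
next
  fix r y
  have "f (r *a preimage_of_scaled y) = s *b (r *b y)"
    by (simp add: scale f_preimage_of_scaled mult.commute)
  then have "scaled_inverse (r *b y) = s *a r *a preimage_of_scaled y"
    by (rule scaled_inverse_eqI)
  then show "scaled_inverse (r *b y) = r *a scaled_inverse y"
    by (simp add: scaled_inverse_def mult.commute)
qed

end

lemma u_S_isomorphism_if_scalar_inverse:
  assumes "module_hom scaleM scaleN f" and "module_hom scaleN scaleM g" and "t \<in> S"
    and "\<And>y. f (g y) = scaleN t y" and "\<And>x. g (f x) = scaleM t x"
  shows "u_S_isomorphism S scaleN scaleM g"
proof -
  interpret f: module_hom scaleM scaleN f by fact
  show ?thesis
    unfolding u_S_isomorphism_def
    using assms(2-5) by (metis f.zero rangeI)
qed

theorem proposition1p1: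
  fixes S :: "'a::comm_ring_1 set"
    and scaleM :: "'a \<Rightarrow> 'm::ab_group_add \<Rightarrow> 'm"
    and scaleN :: "'a \<Rightarrow> 'n::ab_group_add \<Rightarrow> 'n"
    and f :: "'m \<Rightarrow> 'n"
  assumes "multiplicative_subset S"
    and "module scaleM"
    and "module scaleN"
    and "u_S_isomorphism S scaleM scaleN f"
  shows "\<exists>g t. u_S_isomorphism S scaleN scaleM g \<and> t \<in> S \<and>
           (\<forall>y. f (g y) = scaleN t y) \<and> (\<forall>x. g (f x) = scaleM t x)"
proof -
  \<comment> \<open>The module assumptions are already part of \<open>module_hom\<close>.\<close>
  obtain s where "s \<in> S" and hom: "module_hom scaleM scaleN f"
    and "\<And>x. f x = 0 \<Longrightarrow> scaleM s x = 0" and "\<And>y. scaleN s y \<in> range f"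
    using assms(4) unfolding u_S_isomorphism_def by blast
  then interpret u_iso_wrt scaleM scaleN f s
    by (simp add: u_iso_wrt_def u_iso_wrt_axioms_def)
  have "s * s \<in> S"
    using assms(1) \<open>s \<in> S\<close> unfolding multiplicative_subset_def by blast
  then show ?thesis
    using u_S_isomorphism_if_scalar_inverse[OF hom module_hom_scaled_inverse]
      f_scaled_inverse scaled_inverse_f by blast
qed

end
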